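(* Let $E$ be a real Banach space, let $x,y\in E$ be linearly independent, let $[m,M]=\{\alpha\in\mathbb{R}:x+\alpha y\perp y\}$, and for $\alpha\in D(x,y)\setminus[m,M]$ let $f(\alpha)$ be the unique real number with $x+\alpha y\perp x-f(\alpha)y$ (so $f$ is defined almost everywhere on $\mathbb{R}\setminus[m,M]$, and $t+f(t)\neq0$ wherever $f(t)$ is defined). Then for every $\alpha>M$, $$\|x+\alpha y\|=\|x+My\|\exp\Big(\int_M^\alpha \frac{dt}{t+f(t)}\Big),$$ and for every $\alpha<m$, $$\|x+\alpha y\|=\|x+my\|\exp\Big(-\int_\alpha^m \frac{dt}{t+f(t)}\Big),$$ where the integrals are Lebesgue integrals.
   Context: For $u,v\in E$, $u\perp v$ means $\|u+\beta v\|\ge\|u\|$ for every $\beta\in\mathbb{R}$ (Birkhoff–James orthogonality). For linearly independent $x,y\in E$, $D(x,y)$ denotes the set of $\alpha\in\mathbb{R}$ at which the convex function $\phi(\alpha)=\|x+\alpha y\|$ is differentiable; its complement has Lebesgue measure zero. The set $\{\alpha: x+\alpha y\perp y\}$ is a closed bounded interval $[m,M]$, and for $\alpha\in D(x,y)\setminus[m,M]$ there is a unique $f(\alpha)\in\mathbb{R}$ with $x+\alpha y\perp x-f(\alpha)y$. *)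

theory Defs
  imports "HOL-Analysis.Analysis"
begin

definition bj_orth :: "'a::real_normed_vector \<Rightarrow> 'a \<Rightarrow> bool" where
  "bj_orth u v \<longleftrightarrow> (\<forall>\<beta>::real. norm (u + \<beta> *\<^sub>R v) \<ge> norm u)"

definition Dset :: "'a::real_normed_vector \<Rightarrow> 'a \<Rightarrow> real set" where
  "Dset x y = {\<alpha>. (\<lambda>a::real. norm (x + a *\<^sub>R y)) differentiable (at \<alpha>)}"

text \<open>f(alpha): the unique real beta with x + alpha y BJ-orthogonal to x - beta y
  (meaningful for alpha in D(x,y) outside [m,M]; elsewhere an unspecified value).\<close>
definition fBJ :: "'a::real_normed_vector \<Rightarrow> 'a \<Rightarrow> real \<Rightarrow> real" where
  "fBJ x y \<alpha> = (THE \<beta>::real. bj_orth (x + \<alpha> *\<^sub>R y) (x - \<beta> *\<^sub>R y))"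

end

theory Submission
  imports Defs
begin

(* Write phi(a) = norm (x + a y). It is convex, hence differentiable off a countable set, and
   positive since x, y are independent. Where phi'(t) exists, x + t y is BJ-orthogonal to
   x - beta y iff the convex function g \<mapsto> norm (x + t y + g (x - beta y)) is minimal at 0;
   by homogeneity of the norm its derivative there is phi(t) - (t + beta) phi'(t). Likewise
   x + t y is BJ-orthogonal to y iff phi'(t) = 0. Hence off [m, M] the integrand 1 / (t + f t)
   equals phi'(t) / phi(t) = (ln phi)'(t) off a countable set, and ln phi, being locally
   Lipschitz, is the Lebesgue integral of this derivative. *)

lemma convex_on_norm_line: "convex_on UNIV (\<lambda>t::real. norm (p + t *\<^sub>R q))"
  for p q :: "'a::real_normed_vector"
proof (rule convex_onI)
  fix s a c :: real assume s: "0 < s" "s < 1"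
  have "norm (p + ((1 - s) *\<^sub>R a + s *\<^sub>R c) *\<^sub>R q)
      = norm ((1 - s) *\<^sub>R (p + a *\<^sub>R q) + s *\<^sub>R (p + c *\<^sub>R q))"
    by (simp add: algebra_simps)
  also have "\<dots> \<le> (1 - s) * norm (p + a *\<^sub>R q) + s * norm (p + c *\<^sub>R q)"
    using s norm_triangle_ineq[of "(1 - s) *\<^sub>R (p + a *\<^sub>R q)" "s *\<^sub>R (p + c *\<^sub>R q)"] by simp
  finally show "norm (p + ((1 - s) *\<^sub>R a + s *\<^sub>R c) *\<^sub>R q)
      \<le> (1 - s) * norm (p + a *\<^sub>R q) + s * norm (p + c *\<^sub>R q)" .
qed auto

lemma convex_on_secant_slope_mono:
  fixes \<phi> :: "real \<Rightarrow> real"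
  assumes "convex_on I \<phi>" "a \<in> I" "c \<in> I" "a < b" "b < c"
  shows "(\<phi> b - \<phi> a) / (b - a) \<le> (\<phi> c - \<phi> b) / (c - b)"
proof -
  have "(\<phi> a - \<phi> b) / (a - b) \<le> (\<phi> b - \<phi> c) / (b - c)"
    using convex_on_slope_le[OF assms] by linarith
  then show ?thesis
    by (metis minus_diff_eq minus_divide_divide)
qed

lemma DERIV_if_isCont_slope_bounds:
  fixes \<phi> \<rho> :: "real \<Rightarrow> real"
  assumes slope: "\<And>u v. u < v \<Longrightarrow> \<rho> u \<le> (\<phi> v - \<phi> u) / (v - u) \<and> (\<phi> v - \<phi> u) / (v - u) \<le> \<rho> v"
    and cont: "isCont \<rho> t"
  shows "(\<phi> has_real_derivative \<rho> t) (at t)"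
proof -
  have between: "\<bar>(\<phi> (t + h) - \<phi> t) / h - \<rho> t\<bar> \<le> \<bar>\<rho> (t + h) - \<rho> t\<bar>" if "h \<noteq> 0" for h
  proof (cases "h > 0")
    case True
    then have "\<rho> t \<le> (\<phi> (t + h) - \<phi> t) / h \<and> (\<phi> (t + h) - \<phi> t) / h \<le> \<rho> (t + h)"
      using slope[of t "t + h"] by simp
    then show ?thesis by linarith
  next
    case False
    with that have "t + h < t" by simp
    moreover have "(\<phi> t - \<phi> (t + h)) / (t - (t + h)) = (\<phi> (t + h) - \<phi> t) / h"
      by (metis minus_diff_eq minus_divide_divide add_diff_cancel_left')
    ultimately have "\<rho> (t + h) \<le> (\<phi> (t + h) - \<phi> t) / h \<and> (\<phi> (t + h) - \<phi> t) / h \<le> \<rho> t"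
      using slope[of "t + h" t] by simp
    then show ?thesis by linarith
  qed
  have "((\<lambda>h. \<bar>\<rho> (t + h) - \<rho> t\<bar>) \<longlongrightarrow> 0) (at 0)"
    using cont by (simp add: isCont_iff LIM_zero_iff tendsto_rabs_zero)
  then have "((\<lambda>h. (\<phi> (t + h) - \<phi> t) / h - \<rho> t) \<longlongrightarrow> 0) (at 0)"
    by (rule Lim_null_comparison[rotated])
      (auto intro!: always_eventually simp: eventually_at_filter between)
  then show ?thesis
    by (simp add: DERIV_def LIM_zero_iff)
qed

lemma convex_on_differentiable_off_countable:
  fixes \<phi> :: "real \<Rightarrow> real"
  assumes cvx: "convex_on UNIV \<phi>"
  shows "countable {t. \<not> \<phi> differentiable (at t)}"
proof -
  define sl where "sl u v = (\<phi> v - \<phi> u) / (v - u)" for u v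
  \<comment> \<open>the right derivative: it separates left from right secant slopes, hence is monotone\<close>
  define \<rho> where "\<rho> u = Inf (sl u ` {u<..})" for u
  have chord: "sl u v \<le> sl v w" if "u < v" "v < w" for u v w
    unfolding sl_def using convex_on_secant_slope_mono[OF cvx _ _ that] by simp
  have slope: "\<rho> u \<le> sl u v \<and> sl u v \<le> \<rho> v" if "u < v" for u v
  proof
    have "bdd_below (sl u ` {u<..})"
      by (rule bdd_belowI2[of _ "sl (u - 1) u"]) (auto intro: chord)
    then show "\<rho> u \<le> sl u v"
      unfolding \<rho>_def using that by (intro cInf_lower) auto
    show "sl u v \<le> \<rho> v"
      unfolding \<rho>_def using that by (intro cInf_greatest) (auto intro: chord)
  qed
  have "mono \<rho>"
  proof (rule monoI)
    show "\<rho> u \<le> \<rho> v" if "u \<le> v" for u v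
      using that slope[of u v] by (cases "u = v") auto
  qed
  moreover have "{t. \<not> \<phi> differentiable (at t)} \<subseteq> {t. \<not> isCont \<rho> t}"
    using DERIV_if_isCont_slope_bounds[of \<rho> \<phi>] slope
    by (auto simp: sl_def real_differentiable_def)
  ultimately show ?thesis
    using mono_ctble_discont countable_subset by blast
qed

lemma convex_on_UNIV_minimum_iff_deriv_zero:
  fixes G :: "real \<Rightarrow> real"
  assumes cvx: "convex_on UNIV G" and dG: "(G has_real_derivative d) (at c)"
  shows "(\<forall>z. G c \<le> G z) \<longleftrightarrow> d = 0"
proof
  assume "\<forall>z. G c \<le> G z"
  then show "d = 0"
    by (intro DERIV_local_min[OF dG, of 1]) auto
next
  assume "d = 0"
  then show "\<forall>z. G c \<le> G z"
    using convex_on_imp_above_tangent[OF cvx] dG by fastforce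
qed

lemma bj_orth_direction_iff_deriv_zero:
  fixes x y :: "'a::real_normed_vector"
  assumes "((\<lambda>a. norm (x + a *\<^sub>R y)) has_real_derivative d) (at t)"
  shows "bj_orth (x + t *\<^sub>R y) y \<longleftrightarrow> d = 0"
proof -
  have "((\<lambda>b. norm ((x + t *\<^sub>R y) + b *\<^sub>R y)) has_real_derivative d) (at 0)"
    using DERIV_shift[of "\<lambda>a. norm (x + a *\<^sub>R y)" d 0 t] assms
    by (simp add: add.commute algebra_simps)
  from convex_on_UNIV_minimum_iff_deriv_zero[OF convex_on_norm_line this]
  show ?thesis by (simp add: bj_orth_def)
qed

lemma bj_orth_line_iff:
  fixes x y :: "'a::real_normed_vector"
  assumes d: "((\<lambda>a. norm (x + a *\<^sub>R y)) has_real_derivative d) (at t)"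
  shows "bj_orth (x + t *\<^sub>R y) (x - \<beta> *\<^sub>R y) \<longleftrightarrow> norm (x + t *\<^sub>R y) = (t + \<beta>) * d"
proof -
  define \<phi> where "\<phi> a = norm (x + a *\<^sub>R y)" for a
  define w where "w g = t - g * (t + \<beta>) / (1 + g)" for g :: real
  define G where "G g = norm ((x + t *\<^sub>R y) + g *\<^sub>R (x - \<beta> *\<^sub>R y))" for g :: real
  \<comment> \<open>by homogeneity, the ray from x + t y in direction x - \<beta> y is a rescaling of the line\<close>
  have G_eq: "G g = (1 + g) * \<phi> (w g)" if "g \<in> ball 0 1" for g
  proof -
    from that have g: "1 + g > 0" by auto
    have "(1 + g) * w g = t - g * \<beta>"
      using g by (simp add: w_def field_simps)
    then have "(1 + g) *\<^sub>R (x + w g *\<^sub>R y) = (1 + g) *\<^sub>R x + (t - g * \<beta>) *\<^sub>R y"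
      by (simp add: scaleR_add_right)
    also have "\<dots> = (x + t *\<^sub>R y) + g *\<^sub>R (x - \<beta> *\<^sub>R y)"
      by (simp add: algebra_simps)
    finally have "(x + t *\<^sub>R y) + g *\<^sub>R (x - \<beta> *\<^sub>R y) = (1 + g) *\<^sub>R (x + w g *\<^sub>R y)" ..
    then show ?thesis using g by (simp add: G_def \<phi>_def)
  qed
  have "(\<phi> has_real_derivative d) (at (w 0))"
    using d by (simp add: w_def \<phi>_def[abs_def])
  moreover have "(w has_real_derivative - (t + \<beta>)) (at 0)"
    unfolding w_def by (auto intro!: derivative_eq_intros)
  ultimately have "((\<lambda>g. \<phi> (w g)) has_real_derivative d * - (t + \<beta>)) (at 0)"
    by (rule DERIV_chain2)
  then have "((\<lambda>g. (1 + g) * \<phi> (w g)) has_real_derivative 1 * \<phi> (w 0) + (1 + 0) * (d * - (t + \<beta>))) (at 0)"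
    by (auto intro!: derivative_eq_intros)
  then have "((\<lambda>g. (1 + g) * \<phi> (w g)) has_real_derivative \<phi> t - (t + \<beta>) * d) (at 0)"
    by (simp add: w_def algebra_simps)
  then have "(G has_real_derivative \<phi> t - (t + \<beta>) * d) (at 0)"
    by (rule has_field_derivative_transform_within_open[of _ _ _ "ball 0 1"]) (auto simp: G_eq)
  from convex_on_UNIV_minimum_iff_deriv_zero[OF _ this]
  show ?thesis
    unfolding G_def bj_orth_def \<phi>_def by (simp add: convex_on_norm_line)
qed

lemma fBJ_eq:
  fixes x y :: "'a::real_normed_vector"
  assumes d: "((\<lambda>a. norm (x + a *\<^sub>R y)) has_real_derivative d) (at t)" and "d \<noteq> 0"
  shows "fBJ x y t = norm (x + t *\<^sub>R y) / d - t"
  unfolding fBJ_def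
  by (rule the_equality) (use bj_orth_line_iff[OF d] \<open>d \<noteq> 0\<close> in \<open>auto simp: field_simps\<close>)

lemma DERIV_ln_norm_line:
  fixes x y :: "'a::real_normed_vector"
  assumes "x + t *\<^sub>R y \<noteq> 0" "t \<in> Dset x y" "\<not> bj_orth (x + t *\<^sub>R y) y"
  shows "((\<lambda>a. ln (norm (x + a *\<^sub>R y))) has_real_derivative 1 / (t + fBJ x y t)) (at t)"
proof -
  obtain d where d: "((\<lambda>a. norm (x + a *\<^sub>R y)) has_real_derivative d) (at t)"
    using assms(2) by (auto simp: Dset_def real_differentiable_def)
  have "d \<noteq> 0"
    using bj_orth_direction_iff_deriv_zero[OF d] assms(3) by simp
  with assms(1) have "1 / (t + fBJ x y t) = inverse (norm (x + t *\<^sub>R y)) * d"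
    by (simp add: fBJ_eq[OF d] field_simps)
  then show ?thesis
    using DERIV_chain2[OF DERIV_ln d] assms(1) by simp
qed

lemma integral_difference_quotient_tendsto:
  fixes \<psi> :: "real \<Rightarrow> real"
  assumes cont: "continuous_on UNIV \<psi>" and ab: "a \<le> b"
  shows "((\<lambda>h. integral {a..b} (\<lambda>t. (\<psi> (t + h) - \<psi> t) / h)) \<longlongrightarrow> \<psi> b - \<psi> a) (at_right 0)"
proof -
  define \<Psi> where "\<Psi> u = integral {a - 1..u} \<psi>" for u
  have d\<Psi>: "(\<Psi> has_real_derivative \<psi> u) (at u)" if "u \<in> {a - 1<..<b + 2}" for u
  proof -
    have "(\<Psi> has_real_derivative \<psi> u) (at u within {a - 1..b + 2})"
      unfolding \<Psi>_def using that
      by (intro integral_has_real_derivative continuous_on_subset[OF cont]) auto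
    moreover have "at u within {a - 1..b + 2} = at u"
      using that by (intro at_within_interior) simp
    ultimately show ?thesis by simp
  qed
  have shifted: "((\<lambda>t. \<psi> (t + c)) has_integral \<Psi> (b + c) - \<Psi> (a + c)) {a..b}"
    if "0 \<le> c" "c < 1" for c
  proof (rule fundamental_theorem_of_calculus[OF ab])
    fix t assume "t \<in> {a..b}"
    then have "(\<Psi> has_real_derivative \<psi> (t + c)) (at (t + c))"
      using that by (intro d\<Psi>) auto
    moreover have "((\<lambda>t. t + c) has_real_derivative 1) (at t)"
      by (auto intro!: derivative_eq_intros)
    ultimately have "((\<lambda>t. \<Psi> (t + c)) has_real_derivative \<psi> (t + c)) (at t)"
      using DERIV_chain2 by fastforce
    then show "((\<lambda>t. \<Psi> (t + c)) has_vector_derivative \<psi> (t + c)) (at t within {a..b})"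
      by (simp add: has_real_derivative_iff_has_vector_derivative has_vector_derivative_at_within)
  qed
  have "integral {a..b} (\<lambda>t. (\<psi> (t + h) - \<psi> t) / h)
      = (\<Psi> (b + h) - \<Psi> b) / h - (\<Psi> (a + h) - \<Psi> a) / h" if "0 < h" "h < 1" for h
  proof -
    have "((\<lambda>t. (\<psi> (t + h) - \<psi> (t + 0)) / h) has_integral
        ((\<Psi> (b + h) - \<Psi> (a + h)) - (\<Psi> (b + 0) - \<Psi> (a + 0))) / h) {a..b}"
      using that by (intro has_integral_divide has_integral_diff shifted) auto
    then show ?thesis
      by (simp add: integral_unique diff_divide_distrib)
  qed
  then have eq: "\<forall>\<^sub>F h in at_right 0. (\<Psi> (b + h) - \<Psi> b) / h - (\<Psi> (a + h) - \<Psi> a) / h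
      = integral {a..b} (\<lambda>t. (\<psi> (t + h) - \<psi> t) / h)"
    unfolding eventually_at_right[OF zero_less_one] by (intro exI[of _ 1]) auto
  have "((\<lambda>h. (\<Psi> (b + h) - \<Psi> b) / h - (\<Psi> (a + h) - \<Psi> a) / h) \<longlongrightarrow> \<psi> b - \<psi> a) (at 0)"
    using ab by (intro tendsto_diff d\<Psi>[unfolded DERIV_def]) auto
  then have "((\<lambda>h. (\<Psi> (b + h) - \<Psi> b) / h - (\<Psi> (a + h) - \<Psi> a) / h) \<longlongrightarrow> \<psi> b - \<psi> a) (at_right 0)"
    by (simp add: filterlim_at_split)
  then show ?thesis
    using eq by (rule Lim_transform_eventually)
qed

(* The exceptional set is countable rather than merely null because lborel is not complete:
   this makes the pointwise limit g Borel measurable. *)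
lemma set_integral_bounded_convergence_off_countable:
  fixes f :: "nat \<Rightarrow> real \<Rightarrow> real" and g :: "real \<Rightarrow> real"
  assumes X: "countable X"
    and cont: "\<And>n. continuous_on {a..b} (f n)"
    and bound: "\<And>n t. t \<in> {a..b} \<Longrightarrow> \<bar>f n t\<bar> \<le> L"
    and lim: "\<And>t. t \<in> {a..b} - X \<Longrightarrow> (\<lambda>n. f n t) \<longlonglongrightarrow> g t"
  shows "set_integrable lborel {a..b} g"
    and "(\<lambda>n. LINT t:{a..b}|lborel. f n t) \<longlonglongrightarrow> (LINT t:{a..b}|lborel. g t)"
proof -
  define s where "s n t = indicator {a..b} t *\<^sub>R f n t" for n t
  define G where "G t = indicator {a..b} t *\<^sub>R g t" for t
  have meas_s: "s n \<in> borel_measurable lborel" for n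
    unfolding s_def measurable_lborel2
    by (rule borel_measurable_continuous_on_indicator[OF _ cont]) simp
  have lim_s: "(\<lambda>n. s n t) \<longlonglongrightarrow> G t" if "t \<notin> X" for t
    using lim[of t] that by (cases "t \<in> {a..b}") (auto simp: s_def G_def)
  have AE: "AE t in lborel. (\<lambda>n. s n t) \<longlonglongrightarrow> G t"
    by (rule AE_I'[OF countable_imp_null_set_lborel[OF X]]) (use lim_s in auto)
  have meas_G: "G \<in> borel_measurable lborel"
  proof (rule measurable_restrict_countable[OF X])
    show "G \<in> borel_measurable (restrict_space lborel (- X))"
      by (rule borel_measurable_LIMSEQ_real[where u = s])
        (use lim_s meas_s in \<open>auto simp: space_restrict_space intro: measurable_restrict_space1\<close>)
  qed auto
  have dom: "integrable lborel (\<lambda>t. indicator {a..b} t *\<^sub>R L)"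
    by (rule borel_integrable_compact) auto
  have "AE t in lborel. norm (s n t) \<le> indicator {a..b} t *\<^sub>R L" for n
    using bound by (auto simp: s_def indicator_def)
  from integrable_dominated_convergence[OF meas_G meas_s dom AE this]
    integral_dominated_convergence[OF meas_G meas_s dom AE this]
  show "set_integrable lborel {a..b} g"
    and "(\<lambda>n. LINT t:{a..b}|lborel. f n t) \<longlonglongrightarrow> (LINT t:{a..b}|lborel. g t)"
    by (simp_all add: set_integrable_def set_lebesgue_integral_def s_def[abs_def] G_def[abs_def])
qed

(* Proof by the forward difference quotients of psi with steps 1 / (n + 1): they live on
   [a, b + 1], are bounded by L, converge to g off N, and their integrals tend to psi b - psi a. *)
lemma set_integral_FTC_lipschitz_off_countable:
  fixes \<psi> g :: "real \<Rightarrow> real"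
  assumes ab: "a \<le> b" and N: "countable N" and cont: "continuous_on UNIV \<psi>"
    and lip: "L-lipschitz_on {a..b + 1} \<psi>"
    and deriv: "\<And>t. t \<in> {a<..<b} - N \<Longrightarrow> (\<psi> has_real_derivative g t) (at t)"
  shows "set_integrable lborel {a..b} g"
    and "(LINT t:{a..b}|lborel. g t) = \<psi> b - \<psi> a"
proof -
  define h where "h n = inverse (real (Suc n))" for n
  define D where "D n t = (\<psi> (t + h n) - \<psi> t) / h n" for n t
  have h: "0 < h n" "h n \<le> 1" for n
    by (auto simp: h_def field_simps)
  have h_lim: "filterlim h (at_right 0) sequentially"
    unfolding h_def using LIMSEQ_inverse_real_of_nat
    by (rule tendsto_imp_filterlim_at_right) auto
  have cont_D: "continuous_on {a..b} (D n)" for n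
    unfolding D_def using h(1)[of n]
    by (intro continuous_intros continuous_on_compose2[OF cont]) auto
  have bound: "\<bar>D n t\<bar> \<le> L" if "t \<in> {a..b}" for n t
  proof -
    have "\<bar>\<psi> (t + h n) - \<psi> t\<bar> \<le> L * h n"
      using lipschitz_onD[OF lip, of "t + h n" t] that h[of n] by (simp add: dist_real_def)
    then show ?thesis
      using h[of n] by (simp add: D_def abs_divide divide_le_eq)
  qed
  have lim: "(\<lambda>n. D n t) \<longlonglongrightarrow> g t" if "t \<in> {a..b} - (N \<union> {a, b})" for t
  proof -
    have "((\<lambda>k. (\<psi> (t + k) - \<psi> t) / k) \<longlongrightarrow> g t) (at 0)"
      using deriv[of t] that by (auto simp: DERIV_def)
    then have "((\<lambda>k. (\<psi> (t + k) - \<psi> t) / k) \<longlongrightarrow> g t) (at_right 0)"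
      by (simp add: filterlim_at_split)
    from filterlim_compose[OF this h_lim] show ?thesis
      by (simp add: D_def)
  qed
  have exc: "countable (N \<union> {a, b})"
    using N by simp
  note conv = set_integral_bounded_convergence_off_countable[OF exc cont_D bound lim]
  show "set_integrable lborel {a..b} g"
    using conv(1) .
  have "(LINT t:{a..b}|lborel. D n t) = integral {a..b} (D n)" for n
    by (intro set_borel_integral_eq_integral borel_integrable_atLeastAtMost' cont_D)
  moreover have "(\<lambda>n. integral {a..b} (D n)) \<longlonglongrightarrow> \<psi> b - \<psi> a"
    unfolding D_def
    by (rule filterlim_compose[OF integral_difference_quotient_tendsto[OF cont ab] h_lim])
  ultimately have "(\<lambda>n. LINT t:{a..b}|lborel. D n t) \<longlonglongrightarrow> \<psi> b - \<psi> a"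
    by simp
  with conv(2) show "(LINT t:{a..b}|lborel. g t) = \<psi> b - \<psi> a"
    by (rule LIMSEQ_unique)
qed

lemma lipschitz_on_ln:
  assumes "0 < c"
  shows "(1 / c)-lipschitz_on {c..} ln"
proof (rule lipschitz_on_leI)
  fix u v :: real assume uv: "u \<in> {c..}" "v \<in> {c..}" "u \<le> v"
  with assms have "ln v - ln u \<le> (v - u) / u"
    by (intro ln_diff_le) auto
  also have "\<dots> \<le> (v - u) / c"
    using assms uv by (intro divide_left_mono) auto
  finally show "dist (ln u) (ln v) \<le> 1 / c * dist u v"
    using assms uv by (simp add: dist_real_def)
qed (use assms in simp)

lemma lipschitz_on_norm_line: "(norm q)-lipschitz_on S (\<lambda>t. norm (p + t *\<^sub>R q))"
proof (rule lipschitz_onI)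
  fix s t :: real
  have "dist (norm (p + s *\<^sub>R q)) (norm (p + t *\<^sub>R q)) \<le> norm ((p + s *\<^sub>R q) - (p + t *\<^sub>R q))"
    unfolding dist_real_def by (rule norm_triangle_ineq3)
  also have "\<dots> = norm q * dist s t"
    by (simp add: dist_real_def flip: scaleR_diff_left)
  finally show "dist (norm (p + s *\<^sub>R q)) (norm (p + t *\<^sub>R q)) \<le> norm q * dist s t" .
qed simp

lemma lipschitz_on_ln_norm_line:
  fixes p q :: "'a::real_normed_vector"
  assumes nz: "\<And>t. p + t *\<^sub>R q \<noteq> 0"
  obtains L where "L-lipschitz_on {a..b} (\<lambda>t. ln (norm (p + t *\<^sub>R q)))"
proof (cases "a \<le> b")
  case True
  have "continuous_on {a..b} (\<lambda>t. norm (p + t *\<^sub>R q))"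
    by (intro continuous_intros)
  from continuous_attains_inf[OF compact_Icc _ this] True
  obtain z where z: "\<And>t. t \<in> {a..b} \<Longrightarrow> norm (p + z *\<^sub>R q) \<le> norm (p + t *\<^sub>R q)"
    by blast
  define c where "c = norm (p + z *\<^sub>R q)"
  have "0 < c"
    using nz by (simp add: c_def)
  moreover have "(\<lambda>t. norm (p + t *\<^sub>R q)) ` {a..b} \<subseteq> {c..}"
    using z by (auto simp: c_def)
  ultimately have "(1 / c)-lipschitz_on ((\<lambda>t. norm (p + t *\<^sub>R q)) ` {a..b}) ln"
    by (blast intro: lipschitz_on_subset lipschitz_on_ln)
  from lipschitz_on_compose2[OF lipschitz_on_norm_line this] that show ?thesis
    by blast
qed (use that in auto)

lemma norm_line_eq_exp_integral:
  fixes x y :: "'a::real_normed_vector"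
  assumes nz: "\<And>t. x + t *\<^sub>R y \<noteq> 0" and ab: "a \<le> b"
    and no_orth: "\<And>t. t \<in> {a<..<b} \<Longrightarrow> \<not> bj_orth (x + t *\<^sub>R y) y"
  shows "set_integrable lborel {a..b} (\<lambda>t. 1 / (t + fBJ x y t))"
    and "norm (x + b *\<^sub>R y) = norm (x + a *\<^sub>R y) * exp (LINT t:{a..b}|lborel. 1 / (t + fBJ x y t))"
proof -
  define \<psi> where "\<psi> t = ln (norm (x + t *\<^sub>R y))" for t
  have cont: "continuous_on UNIV \<psi>"
    unfolding \<psi>_def using nz by (intro continuous_intros) auto
  obtain L where lip: "L-lipschitz_on {a..b + 1} \<psi>"
    unfolding \<psi>_def using lipschitz_on_ln_norm_line[OF nz] by blast
  have N: "countable (- Dset x y)"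
    using convex_on_differentiable_off_countable[OF convex_on_norm_line]
    by (simp add: Dset_def Compl_eq)
  have "(\<psi> has_real_derivative 1 / (t + fBJ x y t)) (at t)" if "t \<in> {a<..<b} - (- Dset x y)" for t
    unfolding \<psi>_def using that by (intro DERIV_ln_norm_line nz no_orth) auto
  note FTC = set_integral_FTC_lipschitz_off_countable[OF ab N cont lip this]
  show "set_integrable lborel {a..b} (\<lambda>t. 1 / (t + fBJ x y t))"
    using FTC(1) .
  have "norm (x + b *\<^sub>R y) = norm (x + a *\<^sub>R y) * exp (\<psi> b - \<psi> a)"
    using nz[of a] nz[of b] by (simp add: \<psi>_def exp_diff)
  with FTC(2) show "norm (x + b *\<^sub>R y) = norm (x + a *\<^sub>R y) * exp (LINT t:{a..b}|lborel. 1 / (t + fBJ x y t))"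
    by simp
qed

theorem lemma4:
  fixes x y :: "'a::banach" and m M :: real
  assumes indep: "\<forall>a b::real. a *\<^sub>R x + b *\<^sub>R y = 0 \<longrightarrow> a = 0 \<and> b = 0"
    and mM: "{\<alpha>::real. bj_orth (x + \<alpha> *\<^sub>R y) y} = {m..M}"
  shows "(\<forall>\<alpha>>M. set_integrable lborel {M..\<alpha>} (\<lambda>t. 1 / (t + fBJ x y t)) \<and>
            norm (x + \<alpha> *\<^sub>R y) =
              norm (x + M *\<^sub>R y) * exp (LINT t:{M..\<alpha>}|lborel. 1 / (t + fBJ x y t)))
    \<and> (\<forall>\<alpha><m. set_integrable lborel {\<alpha>..m} (\<lambda>t. 1 / (t + fBJ x y t)) \<and>
            norm (x + \<alpha> *\<^sub>R y) =
              norm (x + m *\<^sub>R y) * exp (- (LINT t:{\<alpha>..m}|lborel. 1 / (t + fBJ x y t))))"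
proof -
  have nz: "x + t *\<^sub>R y \<noteq> 0" for t
    using indep[rule_format, of 1 t] by auto
  have no_orth: "\<not> bj_orth (x + t *\<^sub>R y) y" if "t \<notin> {m..M}" for t
    using mM that by blast
  show ?thesis
  proof (intro conjI allI impI)
    fix \<alpha> assume "M < \<alpha>"
    then show "set_integrable lborel {M..\<alpha>} (\<lambda>t. 1 / (t + fBJ x y t))"
      and "norm (x + \<alpha> *\<^sub>R y) = norm (x + M *\<^sub>R y) * exp (LINT t:{M..\<alpha>}|lborel. 1 / (t + fBJ x y t))"
      by (auto intro!: norm_line_eq_exp_integral nz no_orth)
  next
    fix \<alpha> assume "\<alpha> < m"
    then have "\<And>t. t \<in> {\<alpha><..<m} \<Longrightarrow> \<not> bj_orth (x + t *\<^sub>R y) y"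
      by (auto intro!: no_orth)
    note eq = norm_line_eq_exp_integral[OF nz less_imp_le[OF \<open>\<alpha> < m\<close>] this]
    show "set_integrable lborel {\<alpha>..m} (\<lambda>t. 1 / (t + fBJ x y t))"
      using eq(1) by simp
    show "norm (x + \<alpha> *\<^sub>R y) = norm (x + m *\<^sub>R y) * exp (- (LINT t:{\<alpha>..m}|lborel. 1 / (t + fBJ x y t)))"
      using eq(2) by (simp add: exp_minus field_simps)
  qed
qed

end
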